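(* Let $\Gamma$ be a finite connected graph with vertex set $\mathcal{V}$ and Laplacian matrix $L = D - A$ (where $A$ is the adjacency matrix and $D$ the diagonal matrix of vertex degrees). Fix a prime $p$, and for each integer $i \ge 0$ let $e_i$ be the number of invariant factors of $L$ (i.e., diagonal entries of the Smith normal form of $L$ over $\mathbb{Z}$) that are divisible by $p^i$ but not by $p^{i+1}$. Let $\eta$ be an eigenvalue of $L$ with multiplicity $m$, and assume $\eta$ is an integer. Then: (1) if $p^i \mid \eta$, then $m \le 1 + \sum_{j \ge i} e_j$; (2) if $p^i \parallel \eta$ (that is, $p^i \mid \eta$ and $p^{i+1} \nmid \eta$), then $m \le \sum_{0 \le j \le i} e_j$.
   Context: The Smith normal form of an integer matrix $L$ is the unique diagonal matrix $\mathrm{diag}(s_1,\dots,s_v)$ with nonnegative entries, $s_i \mid s_{i+1}$, such that $ULV = \mathrm{diag}(s_1,\dots,s_v)$ for some unimodular integer matrices $U,V$; the $s_i$ are the invariant factors. For a connected graph exactly one invariant factor of $L$ is $0$. *)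

theory Defs
  imports "Jordan_Normal_Form.Char_Poly" "Jordan_Normal_Form.Determinant"
    "HOL-Computational_Algebra.Primes"
begin

definition simple_graph :: "nat \<Rightarrow> (nat \<Rightarrow> nat \<Rightarrow> bool) \<Rightarrow> bool" where
  "simple_graph n E \<longleftrightarrow> (\<forall>i j. E i j \<longrightarrow> i < n \<and> j < n \<and> i \<noteq> j \<and> E j i)"

definition connected_graph :: "nat \<Rightarrow> (nat \<Rightarrow> nat \<Rightarrow> bool) \<Rightarrow> bool" where
  "connected_graph n E \<longleftrightarrow> n \<ge> 1 \<and> (\<forall>i<n. \<forall>j<n. E\<^sup>*\<^sup>* i j)"

definition adjacency_matrix :: "nat \<Rightarrow> (nat \<Rightarrow> nat \<Rightarrow> bool) \<Rightarrow> int mat" where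
  "adjacency_matrix n E = mat n n (\<lambda>(i,j). if E i j then 1 else 0)"

definition degree_matrix :: "nat \<Rightarrow> (nat \<Rightarrow> nat \<Rightarrow> bool) \<Rightarrow> int mat" where
  "degree_matrix n E = mat n n (\<lambda>(i,j). if i = j then int (card {k. k < n \<and> E i k}) else 0)"

definition laplacian :: "nat \<Rightarrow> (nat \<Rightarrow> nat \<Rightarrow> bool) \<Rightarrow> int mat" where
  "laplacian n E = degree_matrix n E - adjacency_matrix n E"

definition unimodular :: "nat \<Rightarrow> int mat \<Rightarrow> bool" where
  "unimodular n U \<longleftrightarrow> U \<in> carrier_mat n n \<and> (det U = 1 \<or> det U = -1)"

definition is_smith_normal_form :: "nat \<Rightarrow> int mat \<Rightarrow> (nat \<Rightarrow> int) \<Rightarrow> bool" where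
  "is_smith_normal_form n L s \<longleftrightarrow>
     (\<exists>U V. unimodular n U \<and> unimodular n V \<and>
        U * L * V = mat n n (\<lambda>(i,j). if i = j then s i else 0)) \<and>
     (\<forall>i<n. s i \<ge> 0) \<and> (\<forall>i. Suc i < n \<longrightarrow> s i dvd s (Suc i))"

definition inv_count :: "nat \<Rightarrow> (nat \<Rightarrow> int) \<Rightarrow> int \<Rightarrow> nat \<Rightarrow> nat" where
  "inv_count n s p i = card {k. k < n \<and> p ^ i dvd s k \<and> \<not> p ^ (Suc i) dvd s k}"

definition eig_mult :: "int mat \<Rightarrow> int \<Rightarrow> nat" where
  "eig_mult L \<eta> = order (real_of_int \<eta>) (char_poly (map_mat real_of_int L))"

end

(*
  The multiplicity m of the integer eigenvalue eta of the symmetric matrix L equals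
  dim ker (L - eta I), and this dimension is unchanged by the unimodular matrices of a
  Smith normal form U L V = diag s.

  (1) If p^i divides eta, then U (L - eta I) V = diag s - eta U V.  The indices k with
  p^i not dividing s k form an initial segment, since the s k form a divisibility chain.
  On it, scaling row k by s (t-1) / s k gives p^a times a matrix congruent to a unit
  multiple of the identity modulo p, so this leading block is nonsingular and
  m <= #{k. p^i dvd s k}.  At most one invariant factor vanishes, because the kernel of
  the Laplacian of a connected graph consists of the constant vectors.

  (2) If p^i exactly divides eta, then U (L - eta I) U^-1 = diag s R - eta I with R
  integral.  On the final segment of indices k with p^(i+1) dividing s k, this is p^i
  times a matrix congruent to -(eta / p^i) I modulo p, hence nonsingular, and
  m <= #{k. p^(i+1) does not divide s k}.
*)
theory Submission
  imports Defs "Jordan_Normal_Form.Jordan_Normal_Form_Uniqueness" "Jordan_Normal_Form.Jordan_Normal_Form_Existence"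
begin

section \<open>Kernel dimension\<close>

lemma adj_mat_inverse:
  fixes A :: "'a::comm_ring_1 mat"
  assumes A: "A \<in> carrier_mat n n" and d: "d * det A = 1"
  shows "d \<cdot>\<^sub>m adj_mat A \<in> carrier_mat n n" "A * (d \<cdot>\<^sub>m adj_mat A) = 1\<^sub>m n"
    "(d \<cdot>\<^sub>m adj_mat A) * A = 1\<^sub>m n"
proof -
  note adj = adj_mat[OF A]
  show "d \<cdot>\<^sub>m adj_mat A \<in> carrier_mat n n" using adj by simp
  have "A * (d \<cdot>\<^sub>m adj_mat A) = d \<cdot>\<^sub>m (A * adj_mat A)" by (rule mult_smult_distrib[OF A adj(1)])
  then show "A * (d \<cdot>\<^sub>m adj_mat A) = 1\<^sub>m n"
    unfolding adj(2) by (auto intro!: eq_matI simp: d mult.assoc[symmetric])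
  have "(d \<cdot>\<^sub>m adj_mat A) * A = d \<cdot>\<^sub>m (adj_mat A * A)" by (rule mult_smult_assoc_mat[OF adj(1) A])
  then show "(d \<cdot>\<^sub>m adj_mat A) * A = 1\<^sub>m n"
    unfolding adj(3) by (auto intro!: eq_matI simp: d mult.assoc[symmetric])
qed

lemma kernel_dim_mono:
  fixes A B :: "'a::field mat"
  assumes A: "A \<in> carrier_mat nr n" and B: "B \<in> carrier_mat nr' n"
    and sub: "mat_kernel A \<subseteq> mat_kernel B"
  shows "kernel.dim n A \<le> kernel.dim n B"
proof -
  interpret KA: kernel nr n A by (unfold_locales, rule A)
  interpret KB: kernel nr' n B by (unfold_locales, rule B)
  obtain bas where fin: "finite bas" and bas: "KA.basis bas" using kernel_basis_exists[OF A] by auto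
  have subA: "bas \<subseteq> mat_kernel A" and liA: "\<not> KA.lin_dep bas"
    using bas unfolding KA.Ker.basis_def by auto
  have subB: "bas \<subseteq> mat_kernel B" using subA sub by auto
  have liB: "\<not> KB.lin_dep bas"
    using KA.lindep_same[OF subA] KB.lindep_same[OF subB] liA by simp
  obtain basB where "finite basB" "KB.basis basB" using kernel_basis_exists[OF B] by auto
  then have "KB.Ker.fin_dim" unfolding KB.Ker.fin_dim_def KB.Ker.basis_def by auto
  then have "card bas \<le> KB.dim" by (rule KB.Ker.li_le_dim(2)[OF _ subB liB])
  then show ?thesis using KA.Ker.dim_basis[OF fin bas] by simp
qed

lemma kernel_dim_le:
  fixes A :: "'a::field mat"
  assumes A: "A \<in> carrier_mat nr n"
  shows "kernel.dim n A \<le> n"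
proof -
  interpret KA: kernel nr n A by (unfold_locales, rule A)
  obtain bas where fin: "finite bas" and bas: "KA.basis bas" using kernel_basis_exists[OF A] by auto
  have subA: "bas \<subseteq> mat_kernel A" and liA: "\<not> KA.lin_dep bas"
    using bas unfolding KA.Ker.basis_def by auto
  have "bas \<subseteq> carrier_vec n" using subA mat_kernel_carrier[OF A] by auto
  moreover have "\<not> KA.NC.lin_dep bas" using KA.lindep_same[OF subA] liA by simp
  ultimately have "card bas \<le> KA.NC.dim" using KA.NC.li_le_dim(2)[OF KA.NC.fin_dim] by simp
  then show ?thesis using KA.Ker.dim_basis[OF fin bas] KA.NC.dim_is_n by simp
qed

lemma kernel_dim_mult_invertible:
  fixes X M Y :: "'a::field mat"
  assumes X: "X \<in> carrier_mat n n" and M: "M \<in> carrier_mat n n" and Y: "Y \<in> carrier_mat n n"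
    and dX: "det X \<noteq> 0" and dY: "det Y \<noteq> 0"
  shows "kernel.dim n (X * M * Y) = kernel.dim n M"
proof -
  note X' = adj_mat_inverse[OF X, of "inverse (det X)"] and Y' = adj_mat_inverse[OF Y, of "inverse (det Y)"]
  have XM: "X * M \<in> carrier_mat n n" using X M by auto
  have "kernel.dim n (X * M * Y) = kernel.dim n (X * M)"
    using mat_kernel_dim_mult_eq_right[OF XM Y] Y' dY by simp
  also have "\<dots> = kernel.dim n M" using mat_kernel_mult_eq[OF M X] X' dX by simp
  finally show ?thesis .
qed

lemma kernel_dim_four_block_le:
  fixes A B C D :: "'a::field mat"
  assumes A: "A \<in> carrier_mat t t" and B: "B \<in> carrier_mat t u"
    and C: "C \<in> carrier_mat u t" and D: "D \<in> carrier_mat u u" and det: "det A \<noteq> 0"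
  shows "kernel.dim (t + u) (four_block_mat A B C D) \<le> u"
proof -
  define Ai where "Ai = inverse (det A) \<cdot>\<^sub>m adj_mat A"
  have Ai: "Ai \<in> carrier_mat t t" "A * Ai = 1\<^sub>m t" "Ai * A = 1\<^sub>m t"
    unfolding Ai_def using adj_mat_inverse[OF A] det by auto
  \<comment> \<open>block elimination: X M Y = diag(1, S) with the Schur complement S = D - C A^-1 B\<close>
  define S where "S = D - C * Ai * B"
  define X where "X = four_block_mat Ai (0\<^sub>m t u) (- (C * Ai)) (1\<^sub>m u)"
  define X' where "X' = four_block_mat A (0\<^sub>m t u) C (1\<^sub>m u)"
  define Y where "Y = four_block_mat (1\<^sub>m t) (- (Ai * B)) (0\<^sub>m u t) (1\<^sub>m u)"
  define Y' where "Y' = four_block_mat (1\<^sub>m t) (Ai * B) (0\<^sub>m u t) (1\<^sub>m u)"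
  define M where "M = four_block_mat A B C D"
  have carr: "X \<in> carrier_mat (t+u) (t+u)" "X' \<in> carrier_mat (t+u) (t+u)"
    "Y \<in> carrier_mat (t+u) (t+u)" "Y' \<in> carrier_mat (t+u) (t+u)" "M \<in> carrier_mat (t+u) (t+u)"
    "S \<in> carrier_mat u u"
    unfolding X_def X'_def Y_def Y'_def M_def S_def using A B C D Ai by auto
  have "X' * X = 1\<^sub>m (t+u)"
    unfolding X_def X'_def
    by (subst mult_four_block_mat[OF A _ C _ Ai(1) _ _ one_carrier_mat], insert A B C D Ai,
        auto intro!: eq_matI)
  then have ker_X: "kernel.dim (t+u) (X * M) = kernel.dim (t+u) M"
    using mat_kernel_mult_eq[OF carr(5,1,2)] by simp
  have YY': "Y * Y' = 1\<^sub>m (t+u)"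
    unfolding Y_def Y'_def
    by (subst mult_four_block_mat[OF one_carrier_mat _ _ one_carrier_mat one_carrier_mat _ _ one_carrier_mat],
        insert A B C D Ai, auto intro!: eq_matI)
  have "X * M \<in> carrier_mat (t+u) (t+u)" using carr by simp
  then have ker_Y: "kernel.dim (t+u) (X * M * Y) = kernel.dim (t+u) (X * M)"
    by (rule mat_kernel_dim_mult_eq_right[OF _ carr(3,4) YY'])
  have XM: "X * M = four_block_mat (1\<^sub>m t) (Ai * B) (0\<^sub>m u t) S"
    unfolding X_def M_def S_def
    by (subst mult_four_block_mat[OF Ai(1) _ _ one_carrier_mat A B C D], insert A B C D Ai, auto)
  have "X * M * Y = four_block_mat (1\<^sub>m t) (0\<^sub>m t u) (0\<^sub>m u t) S"
    unfolding XM Y_def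
    by (subst mult_four_block_mat[OF one_carrier_mat _ _ carr(6) one_carrier_mat], insert A B C D Ai carr, auto)
  then have "kernel.dim (t+u) (X * M * Y) = kernel.dim u S"
    using kernel_four_block_0_mat[OF _ one_carrier_mat carr(6)] kernel_one_mat(1) by simp
  then show ?thesis using ker_X ker_Y kernel_dim_le[OF carr(6)] unfolding M_def by simp
qed

lemma kernel_dim_four_block_swap:
  fixes A B C D :: "'a::field mat"
  assumes A: "A \<in> carrier_mat t t" and B: "B \<in> carrier_mat t u"
    and C: "C \<in> carrier_mat u t" and D: "D \<in> carrier_mat u u"
  shows "kernel.dim (t + u) (four_block_mat A B C D) = kernel.dim (u + t) (four_block_mat D C B A)"
proof -
  define P :: "'a mat" where "P = four_block_mat (0\<^sub>m u t) (1\<^sub>m u) (1\<^sub>m t) (0\<^sub>m t u)"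
  define Q :: "'a mat" where "Q = four_block_mat (0\<^sub>m t u) (1\<^sub>m t) (1\<^sub>m u) (0\<^sub>m u t)"
  define M where "M = four_block_mat A B C D"
  have carr: "P \<in> carrier_mat (t+u) (t+u)" "Q \<in> carrier_mat (t+u) (t+u)" "M \<in> carrier_mat (t+u) (t+u)"
    unfolding P_def Q_def M_def using A B C D by (auto simp: add.commute)
  have QP: "Q * P = 1\<^sub>m (t+u)"
    unfolding P_def Q_def
    by (subst mult_four_block_mat[OF zero_carrier_mat one_carrier_mat one_carrier_mat zero_carrier_mat
          zero_carrier_mat one_carrier_mat one_carrier_mat zero_carrier_mat]) auto
  have PM: "P * M = four_block_mat C D A B"
    unfolding P_def M_def by (subst mult_four_block_mat[OF _ _ _ _ A B C D], insert A B C D, auto)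
  have PMQ: "P * M * Q = four_block_mat D C B A"
    unfolding PM Q_def by (subst mult_four_block_mat[OF C D A B], insert A B C D, auto)
  have PMc: "P * M \<in> carrier_mat (t+u) (t+u)" using carr by simp
  have "kernel.dim (t+u) M = kernel.dim (t+u) (P * M)"
    using mat_kernel_mult_eq[OF carr(3,1,2) QP] by simp
  also have "\<dots> = kernel.dim (t+u) (P * M * Q)"
    by (rule mat_kernel_dim_mult_eq_right[OF PMc carr(2,1) QP, symmetric])
  also have "\<dots> = kernel.dim (u+t) (four_block_mat D C B A)"
    unfolding PMQ by (simp add: add.commute)
  finally show ?thesis unfolding M_def .
qed

lemma kernel_dim_le_leading_block:
  fixes M :: "'a::field mat"
  assumes M: "M \<in> carrier_mat (t + u) (t + u)"
    and det: "det (mat t t (\<lambda>(i,j). M $$ (i,j))) \<noteq> 0"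
  shows "kernel.dim (t + u) M \<le> u"
proof -
  obtain A B C D where split: "split_block M t t = (A,B,C,D)" by (cases "split_block M t t")
  have "dim_row M = t + u" "dim_col M = t + u" using M by auto
  note blocks = split_block[OF split this]
  have "A = mat t t (\<lambda>(i,j). M $$ (i,j))"
    using split unfolding split_block_def Let_def by (auto intro!: eq_matI)
  then show ?thesis using kernel_dim_four_block_le[OF blocks(1-4)] blocks(5) det by simp
qed

lemma kernel_dim_le_trailing_block:
  fixes M :: "'a::field mat"
  assumes M: "M \<in> carrier_mat (t + u) (t + u)"
    and det: "det (mat u u (\<lambda>(i,j). M $$ (t + i, t + j))) \<noteq> 0"
  shows "kernel.dim (t + u) M \<le> t"
proof -
  obtain A B C D where split: "split_block M t t = (A,B,C,D)" by (cases "split_block M t t")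
  have "dim_row M = t + u" "dim_col M = t + u" using M by auto
  note blocks = split_block[OF split this]
  have "D = mat u u (\<lambda>(i,j). M $$ (t + i, t + j))"
    using split M unfolding split_block_def Let_def by (auto intro!: eq_matI simp: add.commute)
  then have "kernel.dim (u + t) (four_block_mat D C B A) \<le> t"
    using kernel_dim_four_block_le[OF blocks(4,3,2,1)] det by simp
  then show ?thesis using kernel_dim_four_block_swap[OF blocks(1-4)] blocks(5) by simp
qed

lemma sum_diag_mult:
  fixes a :: "'a::semiring_0" and i n :: nat
  assumes "i < n"
  shows "(\<Sum>j = 0..<n. (if i = j then a else 0) * f j) = a * f i"
proof -
  have "(\<Sum>j = 0..<n. (if i = j then a else 0) * f j) = (\<Sum>j \<in> {i}. (if i = j then a else 0) * f j)"
    by (rule sum.mono_neutral_right) (use assms in auto)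
  then show ?thesis by simp
qed

lemma mat_kernel_diag_mat:
  fixes d :: "nat \<Rightarrow> 'a::field"
  shows "mat_kernel (mat n n (\<lambda>(i,j). if i = j then d i else 0)) =
    {v \<in> carrier_vec n. \<forall>i<n. d i \<noteq> 0 \<longrightarrow> v $ i = 0}"
proof -
  have "mat n n (\<lambda>(i,j). if i = j then d i else 0) *\<^sub>v v = vec n (\<lambda>i. d i * v $ i)"
    if "v \<in> carrier_vec n" for v
    using that by (intro eq_vecI) (auto simp: scalar_prod_def sum_diag_mult)
  then show ?thesis unfolding mat_kernel_def by (auto simp: vec_eq_iff)
qed

lemma kernel_dim_partial_identity:
  fixes E :: "'a::field mat"
  assumes E: "E \<in> carrier_mat n n" and r: "r \<le> n"
    and Eij: "\<And>i j. i < n \<Longrightarrow> j < n \<Longrightarrow> E $$ (i,j) = (if i = j \<and> i < r then 1 else 0)"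
  shows "kernel.dim n E = n - r"
proof -
  have "pivot_fun E (\<lambda>i. if i < r then i else n) n"
  proof (rule pivot_funI)
    show "dim_row E = n" using E by simp
  next
    fix i assume "i < n"
    then show "(if i < r then i else n) \<le> n" by simp
  next
    fix i j assume "i < n" "j < (if i < r then i else n)"
    then show "E $$ (i,j) = 0" by (cases "i < r") (simp_all add: Eij)
  next
    fix i assume "i < n" "Suc i < n"
    then show "(if Suc i < r then Suc i else n) > (if i < r then i else n)
        \<or> (if Suc i < r then Suc i else n) = n" by auto
  next
    fix i assume "i < n" "(if i < r then i else n) < n"
    then show "E $$ (i, if i < r then i else n) = 1" by (cases "i < r") (simp_all add: Eij)
  next
    fix i i' assume "i < n" "(if i < r then i else n) < n" "i' < n" "i' \<noteq> i"
    then show "E $$ (i', if i < r then i else n) = 0" by (cases "i < r") (simp_all add: Eij)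
  qed
  then have ref: "row_echelon_form E" unfolding row_echelon_form_def using E by auto
  have rows: "row E i \<noteq> 0\<^sub>v n \<longleftrightarrow> i < r" if i: "i < n" for i
  proof
    assume "i < r"
    then have "row E i $ i \<noteq> 0\<^sub>v n $ i" using i E by (simp add: Eij)
    then show "row E i \<noteq> 0\<^sub>v n" by auto
  next
    assume nonzero: "row E i \<noteq> 0\<^sub>v n"
    show "i < r"
    proof (rule ccontr)
      assume "\<not> i < r"
      then have "row E i = 0\<^sub>v n" using i E by (intro eq_vecI) (simp_all add: Eij)
      with nonzero show False by simp
    qed
  qed
  have "{i. i < n \<and> row E i \<noteq> 0\<^sub>v n} = {..<r}"
  proof (rule Set.set_eqI)
    fix i
    show "i \<in> {i. i < n \<and> row E i \<noteq> 0\<^sub>v n} \<longleftrightarrow> i \<in> {..<r}" using rows[of i] r by auto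
  qed
  then show ?thesis using find_base_vectors(6)[OF ref E] by simp
qed

lemma kernel_dim_diag_mat:
  fixes d :: "nat \<Rightarrow> 'a::field"
  assumes r: "r \<le> n" and nz: "\<And>i. i < n \<Longrightarrow> d i = 0 \<longleftrightarrow> r \<le> i"
  shows "kernel.dim n (mat n n (\<lambda>(i,j). if i = j then d i else 0)) = n - r"
proof -
  define E where "E = mat n n (\<lambda>(i,j). if i = j then (if d i = 0 then 0 else 1) else (0::'a))"
  have "((if d i = 0 then 0 else 1) \<noteq> (0::'a)) = (d i \<noteq> 0)" for i by simp
  then have ker: "mat_kernel (mat n n (\<lambda>(i,j). if i = j then d i else 0)) = mat_kernel E"
    unfolding E_def mat_kernel_diag_mat by (simp only:)
  have "kernel.dim n E = n - r"
  proof (rule kernel_dim_partial_identity[OF _ r])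
    show "E \<in> carrier_mat n n" unfolding E_def by simp
    fix i j assume "i < n" "j < n"
    then show "E $$ (i,j) = (if i = j \<and> i < r then 1 else 0)" using nz[of i] by (auto simp: E_def)
  qed
  then show ?thesis using ker by simp
qed

lemma kernel_dim_le_1_if_constant:
  fixes A :: "'a::field mat"
  assumes A: "A \<in> carrier_mat nr n"
    and const: "\<And>v i j. v \<in> mat_kernel A \<Longrightarrow> i < n \<Longrightarrow> j < n \<Longrightarrow> v $ i = v $ j"
  shows "kernel.dim n A \<le> 1"
proof -
  \<comment> \<open>row i < n - 1 of D is e_i - e_(n-1), so D kills constant vectors and has leading block 1\<close>
  define D where "D = mat n n (\<lambda>(i,j).
    (if Suc i < n \<and> j = i then 1 else 0) - (if Suc i < n \<and> j = n - 1 then 1 else (0::'a)))"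
  have D: "D \<in> carrier_mat n n" unfolding D_def by simp
  have "mat_kernel A \<subseteq> mat_kernel D"
  proof
    fix v assume v: "v \<in> mat_kernel A"
    then have vc: "v \<in> carrier_vec n" using mat_kernelD[OF A] by auto
    have "(D *\<^sub>v v) $ i = 0" if i: "i < n" for i
    proof -
      have "(D *\<^sub>v v) $ i = (\<Sum>j<n. (if Suc i < n \<and> j = i then v $ j else 0)
          - (if Suc i < n \<and> j = n - 1 then v $ j else 0))"
        using i vc by (auto simp: D_def scalar_prod_def lessThan_atLeast0 intro!: sum.cong)
      also have "\<dots> = (if Suc i < n then v $ i - v $ (n - 1) else 0)"
        using i by (auto simp: sum_subtractf)
      finally show ?thesis using const[OF v i, of "n - 1"] i by auto
    qed
    then show "v \<in> mat_kernel D" using vc D by (intro mat_kernelI) (auto intro!: eq_vecI)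
  qed
  then have "kernel.dim n A \<le> kernel.dim n D" by (rule kernel_dim_mono[OF A D])
  also have "kernel.dim n D \<le> 1"
  proof (cases n)
    case 0
    then show ?thesis using kernel_dim_le[OF D] by simp
  next
    case (Suc m)
    have "mat m m (\<lambda>(i,j). D $$ (i,j)) = 1\<^sub>m m" unfolding D_def Suc by (auto intro!: eq_matI)
    then show ?thesis using kernel_dim_le_leading_block[of D m 1] D Suc by simp
  qed
  finally show ?thesis .
qed

section \<open>Hermitian matrices\<close>

lemma mat_kernel_hermitian_square:
  fixes B :: "complex mat"
  assumes B: "B \<in> carrier_mat n n"
    and herm: "\<And>i j. i < n \<Longrightarrow> j < n \<Longrightarrow> B $$ (j, i) = cnj (B $$ (i, j))"
  shows "mat_kernel (B * B) = mat_kernel B"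
proof
  show "mat_kernel B \<subseteq> mat_kernel (B * B)" by (rule mat_kernel_mult_subset[OF B B])
  show "mat_kernel (B * B) \<subseteq> mat_kernel B"
  proof
    fix v assume "v \<in> mat_kernel (B * B)"
    then have v: "v \<in> carrier_vec n" and BBv: "(B * B) *\<^sub>v v = 0\<^sub>v n"
      using mat_kernelD[of "B * B" n n] B by auto
    define w where "w = B *\<^sub>v v"
    have w: "w \<in> carrier_vec n" unfolding w_def using B v by auto
    have Bw: "(\<Sum>i<n. B $$ (j,i) * w $ i) = 0" if "j < n" for j
    proof -
      have "(B *\<^sub>v w) $ j = 0" using BBv assoc_mult_mat_vec[OF B B v] that by (simp add: w_def)
      then show ?thesis using B w that by (auto simp: scalar_prod_def lessThan_atLeast0)
    qed
    have wi: "w $ i = (\<Sum>j<n. B $$ (i,j) * v $ j)" if "i < n" for i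
      unfolding w_def using B v that by (simp add: scalar_prod_def lessThan_atLeast0)
    have Bw_cnj: "(\<Sum>i<n. B $$ (i,j) * cnj (w $ i)) = cnj (\<Sum>i<n. B $$ (j,i) * w $ i)" if "j < n" for j
      unfolding cnj_sum using that herm[of j] by (intro sum.cong refl) simp
    have "w \<bullet>c w = (\<Sum>i<n. w $ i * cnj (w $ i))"
      using w by (simp add: scalar_prod_def lessThan_atLeast0)
    also have "\<dots> = (\<Sum>i<n. \<Sum>j<n. v $ j * (B $$ (i,j) * cnj (w $ i)))"
      by (intro sum.cong refl) (simp add: wi sum_distrib_right mult_ac)
    also have "\<dots> = (\<Sum>j<n. \<Sum>i<n. v $ j * (B $$ (i,j) * cnj (w $ i)))"
      by (rule sum.swap)
    also have "\<dots> = (\<Sum>j<n. v $ j * cnj (\<Sum>i<n. B $$ (j,i) * w $ i))"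
      by (intro sum.cong refl) (simp add: Bw_cnj flip: sum_distrib_left)
    also have "\<dots> = 0" using Bw by simp
    finally have "w = 0\<^sub>v n" using w by simp
    then show "v \<in> mat_kernel B" using v B unfolding w_def by (intro mat_kernelI) auto
  qed
qed

lemma sum_list_eq_if_min_1_eq_min_2:
  fixes xs :: "nat list"
  assumes "sum_list (map (min 1) xs) = sum_list (map (min 2) xs)"
  shows "sum_list xs = sum_list (map (min 1) xs)"
  using assms
proof (induction xs)
  case (Cons x xs)
  have "sum_list (map (min 1) xs) \<le> sum_list (map (min 2) xs)" by (rule sum_list_mono) auto
  with Cons.prems have "x \<le> 1" and "sum_list (map (min 1) xs) = sum_list (map (min 2) xs)" by auto
  with Cons.IH show ?case by auto
qed simp

text \<open>ker B = ker B^2 for B = A - e I forces every Jordan block of A for e to have size 1.\<close>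
lemma order_char_poly_hermitian:
  fixes A :: "complex mat"
  assumes A: "A \<in> carrier_mat n n"
    and herm: "\<And>i j. i < n \<Longrightarrow> j < n \<Longrightarrow> A $$ (j, i) = cnj (A $$ (i, j))"
    and e: "cnj e = e"
  shows "Polynomial.order e (char_poly A) = kernel.dim n (char_matrix A e)"
proof -
  obtain as where "char_poly A = (\<Prod>a\<leftarrow>as. [:- a, 1:])" using char_poly_factorized[OF A] by auto
  then obtain n_as where jnf: "jordan_nf A n_as" using jordan_nf_exists[OF A] by auto
  let ?B = "char_matrix A e"
  let ?sizes = "map fst (filter (\<lambda>(n, e'). e' = e) n_as)"
  have B: "?B \<in> carrier_mat n n" using A by simp
  have Bij: "?B $$ (i,j) = A $$ (i,j) - (if i = j then e else 0)" if "i < n" "j < n" for i j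
    using A that by (auto simp: char_matrix_def)
  have "mat_kernel (?B * ?B) = mat_kernel ?B"
  proof (rule mat_kernel_hermitian_square[OF B])
    fix i j assume "i < n" "j < n"
    then show "?B $$ (j, i) = cnj (?B $$ (i, j))"
      using herm[of i j] by (cases "i = j") (simp_all add: Bij e)
  qed
  then have "dim_gen_eigenspace A e 1 = dim_gen_eigenspace A e 2"
    using B by (simp add: dim_gen_eigenspace_def kernel_dim_def numeral_2_eq_2)
  then have "sum_list (map (min 1) ?sizes) = sum_list (map (min 2) ?sizes)"
    unfolding dim_gen_eigenspace[OF jnf] .
  then have "sum_list ?sizes = dim_gen_eigenspace A e 1"
    unfolding dim_gen_eigenspace[OF jnf] by (rule sum_list_eq_if_min_1_eq_min_2)
  also have "\<dots> = kernel.dim n ?B" using B by (simp add: dim_gen_eigenspace_def kernel_dim_def)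
  finally show ?thesis
    unfolding jordan_nf_order[OF jnf] by (simp add: case_prod_beta')
qed

section \<open>Determinants modulo a prime\<close>

lemma det_cong_mod:
  fixes G H :: "int mat" and m :: int
  assumes G: "G \<in> carrier_mat t t" and H: "H \<in> carrier_mat t t"
    and cong: "\<And>i j. i < t \<Longrightarrow> j < t \<Longrightarrow> G $$ (i,j) mod m = H $$ (i,j) mod m"
  shows "det G mod m = det H mod m"
proof -
  have prod: "(\<Prod>i = 0..<t. G $$ (i, \<sigma> i)) mod m = (\<Prod>i = 0..<t. H $$ (i, \<sigma> i)) mod m"
    if "\<sigma> permutes {0..<t}" for \<sigma>
  proof -
    have "(\<Prod>i = 0..<t. G $$ (i, \<sigma> i) mod m) = (\<Prod>i = 0..<t. H $$ (i, \<sigma> i) mod m)"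
      using cong permutes_in_image[OF that] by (intro prod.cong) auto
    then have "(\<Prod>i = 0..<t. G $$ (i, \<sigma> i) mod m) mod m = (\<Prod>i = 0..<t. H $$ (i, \<sigma> i) mod m) mod m"
      by simp
    then show ?thesis by (simp only: mod_prod_eq)
  qed
  have "det G mod m = (\<Sum>\<sigma> | \<sigma> permutes {0..<t}. signof \<sigma> * (\<Prod>i = 0..<t. G $$ (i, \<sigma> i))) mod m"
    using G unfolding det_def by simp
  also have "\<dots> = (\<Sum>\<sigma> | \<sigma> permutes {0..<t}. signof \<sigma> * (\<Prod>i = 0..<t. G $$ (i, \<sigma> i)) mod m) mod m"
    by (rule mod_sum_eq[symmetric])
  also have "\<dots> = (\<Sum>\<sigma> | \<sigma> permutes {0..<t}. signof \<sigma> * (\<Prod>i = 0..<t. H $$ (i, \<sigma> i)) mod m) mod m"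
  proof (rule arg_cong[of _ _ "\<lambda>x. x mod m"], rule sum.cong[OF refl])
    fix \<sigma> assume "\<sigma> \<in> {\<sigma>. \<sigma> permutes {0..<t}}"
    then show "signof \<sigma> * (\<Prod>i = 0..<t. G $$ (i, \<sigma> i)) mod m
        = signof \<sigma> * (\<Prod>i = 0..<t. H $$ (i, \<sigma> i)) mod m"
      using prod[of \<sigma>] by (intro mod_mult_cong) auto
  qed
  also have "\<dots> = (\<Sum>\<sigma> | \<sigma> permutes {0..<t}. signof \<sigma> * (\<Prod>i = 0..<t. H $$ (i, \<sigma> i))) mod m"
    by (rule mod_sum_eq)
  also have "\<dots> = det H mod m"
    using H unfolding det_def by simp
  finally show ?thesis .
qed

lemma det_ne_0_if_cong_scalar_mod_prime:
  fixes G :: "int mat" and p c :: int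
  assumes G: "G \<in> carrier_mat t t" and p: "prime p" and c: "\<not> p dvd c"
    and cong: "\<And>i j. i < t \<Longrightarrow> j < t \<Longrightarrow> p dvd G $$ (i,j) - (if i = j then c else 0)"
  shows "det G \<noteq> 0"
proof
  assume "det G = 0"
  moreover have "det G mod p = det (c \<cdot>\<^sub>m 1\<^sub>m t) mod p"
  proof (rule det_cong_mod[OF G])
    fix i j assume "i < t" "j < t"
    then show "G $$ (i,j) mod p = (c \<cdot>\<^sub>m 1\<^sub>m t) $$ (i,j) mod p"
      using cong[of i j] by (cases "i = j") (auto simp: mod_eq_dvd_iff)
  qed simp
  ultimately have "p dvd c ^ t" by (simp add: mod_eq_0_iff_dvd)
  then show False using c prime_dvd_power[OF p] by blast
qed

lemma det_scale_rows:
  fixes B :: "'a::comm_ring_1 mat"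
  assumes B: "B \<in> carrier_mat t t"
  shows "det (mat t t (\<lambda>(i,j). f i * B $$ (i,j))) = (\<Prod>i = 0..<t. f i) * det B"
proof -
  have "det (mat t t (\<lambda>(i,j). f i * B $$ (i,j)))
      = (\<Sum>\<sigma> | \<sigma> permutes {0..<t}. signof \<sigma> * (\<Prod>i = 0..<t. f i * B $$ (i, \<sigma> i)))"
    unfolding det_def by (auto intro!: sum.cong prod.cong dest: permutes_in_image)
  also have "\<dots> = (\<Sum>\<sigma> | \<sigma> permutes {0..<t}. (\<Prod>i = 0..<t. f i) * (signof \<sigma> * (\<Prod>i = 0..<t. B $$ (i, \<sigma> i))))"
    by (simp add: prod.distrib mult_ac)
  also have "\<dots> = (\<Prod>i = 0..<t. f i) * det B"
    using B unfolding det_def by (simp add: sum_distrib_left)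
  finally show ?thesis .
qed

text \<open>Scaling row k by s (t-1) / s k turns the matrix into p^a times a matrix congruent
  to a unit multiple of the identity modulo p, where p^a exactly divides s (t-1) and a < i.\<close>
lemma det_diag_sub_multiple_ne_0:
  fixes s :: "nat \<Rightarrow> int" and w :: "nat \<Rightarrow> nat \<Rightarrow> int" and p \<eta> :: int
  assumes p: "prime p" and p\<eta>: "p ^ i dvd \<eta>"
    and not_dvd: "\<And>k. k < t \<Longrightarrow> \<not> p ^ i dvd s k"
    and chain: "\<And>k. k < t \<Longrightarrow> s k dvd s (t - 1)"
  shows "det (mat t t (\<lambda>(k,l). (if k = l then s k else 0) - \<eta> * w k l)) \<noteq> 0"
proof (cases "t = 0")
  case True
  then show ?thesis by (simp add: det_def)
next
  case False
  define G where "G = mat t t (\<lambda>(k,l). (if k = l then s k else 0) - \<eta> * w k l)"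
  define d where "d = s (t - 1)"
  define a where "a = multiplicity p d"
  have d: "d \<noteq> 0" "\<not> p ^ i dvd d" using not_dvd[of "t - 1"] False unfolding d_def by auto
  have p_unit: "\<not> is_unit p" using p not_prime_unit by blast
  obtain d' where dd': "d = p ^ a * d'" and d': "\<not> p dvd d'"
    using multiplicity_decompose'[OF d(1) p_unit] unfolding a_def by metis
  have "a < i"
  proof (rule ccontr)
    assume "\<not> a < i"
    then have "p ^ i dvd p ^ a" by (simp add: le_imp_power_dvd)
    then show False using d(2) dd' by (auto dest: dvd_mult_right)
  qed
  then have "p ^ (a + 1) dvd \<eta>" using p\<eta> le_imp_power_dvd[of "a + 1" i p] dvd_trans by auto
  then obtain \<eta>' where \<eta>': "\<eta> = p ^ (a + 1) * \<eta>'" by (auto simp: dvd_def)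
  define r where "r k = d div s k" for k
  have rs: "r k * s k = d" if "k < t" for k unfolding r_def d_def using chain[OF that] by simp
  define G' where "G' = mat t t (\<lambda>(k,l). (if k = l then d' else 0) - p * \<eta>' * r k * w k l)"
  have G': "G' \<in> carrier_mat t t" unfolding G'_def by simp
  have scaled: "mat t t (\<lambda>(k,l). r k * G $$ (k,l)) = p ^ a \<cdot>\<^sub>m G'"
  proof (rule eq_matI)
    fix k l assume "k < dim_row (p ^ a \<cdot>\<^sub>m G')" "l < dim_col (p ^ a \<cdot>\<^sub>m G')"
    then have k: "k < t" and l: "l < t" unfolding G'_def by auto
    show "mat t t (\<lambda>(k,l). r k * G $$ (k,l)) $$ (k,l) = (p ^ a \<cdot>\<^sub>m G') $$ (k,l)"
      using k l rs[OF k] unfolding G_def G'_def \<eta>' dd'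
      by (cases "k = l") (simp_all add: algebra_simps power_add)
  qed (auto simp: G'_def)
  have "det G' \<noteq> 0"
    by (rule det_ne_0_if_cong_scalar_mod_prime[OF G' p d']) (auto simp: G'_def)
  moreover have "p \<noteq> 0" using p by auto
  ultimately have "det (p ^ a \<cdot>\<^sub>m G') \<noteq> 0" using G' by simp
  moreover have "(\<Prod>k = 0..<t. r k) * det G = det (p ^ a \<cdot>\<^sub>m G')"
    using det_scale_rows[of G t r] scaled unfolding G_def by simp
  ultimately show ?thesis unfolding G_def by auto
qed

text \<open>Every entry is divisible by p^i, and after dividing by p^i the matrix is congruent
  to -(\<eta> / p^i) times the identity modulo p.\<close>
lemma det_diag_mult_sub_scalar_ne_0:
  fixes s :: "nat \<Rightarrow> int" and w :: "nat \<Rightarrow> nat \<Rightarrow> int" and p \<eta> :: int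
  assumes p: "prime p" and p\<eta>: "p ^ i dvd \<eta>" and not_p\<eta>: "\<not> p ^ Suc i dvd \<eta>"
    and dvd: "\<And>k. k < u \<Longrightarrow> p ^ Suc i dvd s k"
  shows "det (mat u u (\<lambda>(k,l). s k * w k l - (if k = l then \<eta> else 0))) \<noteq> 0"
proof -
  obtain \<eta>' where \<eta>': "\<eta> = p ^ i * \<eta>'" using p\<eta> by (auto simp: dvd_def)
  have "\<not> p dvd \<eta>'" using not_p\<eta> unfolding \<eta>' by (auto simp: mult_dvd_mono)
  then have not_dvd: "\<not> p dvd - \<eta>'" by simp
  define q where "q k = s k div p ^ Suc i" for k
  have sq: "s k = p ^ i * (p * q k)" if "k < u" for k
    using dvd[OF that] unfolding q_def by (simp add: mult.assoc[symmetric] mult.commute[of _ p])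
  define G' where "G' = mat u u (\<lambda>(k,l). p * q k * w k l - (if k = l then \<eta>' else 0))"
  have G': "G' \<in> carrier_mat u u" unfolding G'_def by simp
  have "mat u u (\<lambda>(k,l). s k * w k l - (if k = l then \<eta> else 0)) = p ^ i \<cdot>\<^sub>m G'"
    by (rule eq_matI) (auto simp: G'_def sq \<eta>' algebra_simps)
  moreover have "det G' \<noteq> 0"
    by (rule det_ne_0_if_cong_scalar_mod_prime[OF G' p not_dvd]) (auto simp: G'_def)
  ultimately show ?thesis using G' p by (auto simp: prime_gt_0_int[OF p, THEN less_imp_neq, symmetric])
qed

section \<open>Divisibility chains and invariant factors\<close>

lemma dvd_chain_le:
  fixes s :: "nat \<Rightarrow> 'a::comm_monoid_mult"
  assumes chain: "\<forall>i. Suc i < n \<longrightarrow> s i dvd s (Suc i)" and "j \<le> k" and "k < n"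
  shows "s j dvd s k"
  using assms(2,3)
proof (induction k rule: dec_induct)
  case (step m)
  then show ?case using chain dvd_trans by auto
qed simp

lemma down_closed_eq_lessThan:
  fixes T :: "nat set"
  assumes sub: "T \<subseteq> {..<n}" and down: "\<And>k j. k \<in> T \<Longrightarrow> j \<le> k \<Longrightarrow> j \<in> T"
  obtains t where "t \<le> n" "T = {..<t}"
proof -
  define t where "t = (LEAST k. k \<notin> T)"
  have "n \<notin> T" using sub by auto
  then have t: "t \<notin> T" "t \<le> n"
    using LeastI[of "\<lambda>k. k \<notin> T" n] Least_le[of "\<lambda>k. k \<notin> T" n] unfolding t_def by auto
  have "T = {..<t}"
  proof (intro equalityI subsetI)
    fix k assume "k \<in> T"
    then show "k \<in> {..<t}" using t(1) down[of k t] by (cases "t \<le> k") auto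
  next
    fix k assume "k \<in> {..<t}"
    then show "k \<in> T" using not_less_Least[of k "\<lambda>k. k \<notin> T"] unfolding t_def by auto
  qed
  then show ?thesis using t(2) that by blast
qed

lemma dvd_chain_not_dvd_eq_lessThan:
  fixes s :: "nat \<Rightarrow> int"
  assumes chain: "\<forall>i. Suc i < n \<longrightarrow> s i dvd s (Suc i)"
  obtains t where "t \<le> n" "{k. k < n \<and> \<not> d dvd s k} = {..<t}"
proof (rule down_closed_eq_lessThan)
  show "{k. k < n \<and> \<not> d dvd s k} \<subseteq> {..<n}" by auto
  fix k j assume "k \<in> {k. k < n \<and> \<not> d dvd s k}" and "j \<le> k"
  then show "j \<in> {k. k < n \<and> \<not> d dvd s k}"
    using dvd_chain_le[OF chain, of j k] dvd_trans[of d "s j" "s k"] by auto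
qed (use that in blast)

lemma exact_power_dvd_iff_multiplicity:
  fixes p x :: int
  assumes "prime p"
  shows "p ^ j dvd x \<and> \<not> p ^ Suc j dvd x \<longleftrightarrow> x \<noteq> 0 \<and> multiplicity p x = j"
proof -
  have "\<not> is_unit p" using assms not_prime_unit by blast
  then show ?thesis
    using multiplicity_eqI[of p j x] multiplicity_dvd[of p x]
      power_dvd_iff_le_multiplicity[of x p "Suc (multiplicity p x)"] by auto
qed

lemma inv_count_eq_card_multiplicity:
  assumes "prime p"
  shows "inv_count n s p j = card {k. k < n \<and> s k \<noteq> 0 \<and> multiplicity p (s k) = j}"
  unfolding inv_count_def exact_power_dvd_iff_multiplicity[OF assms] by (simp add: conj_assoc)

lemma card_dvd_le_inv_count_sum:
  fixes s :: "nat \<Rightarrow> int" and p :: int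
  assumes p: "prime p"
  shows "card {k. k < n \<and> p ^ i dvd s k}
    \<le> card {k. k < n \<and> s k = 0} + (\<Sum>j \<in> {j. i \<le> j \<and> inv_count n s p j \<noteq> 0}. inv_count n s p j)"
proof -
  let ?J = "{j. i \<le> j \<and> inv_count n s p j \<noteq> 0}"
  let ?S = "\<lambda>j. {k. k < n \<and> s k \<noteq> 0 \<and> multiplicity p (s k) = j}"
  have p_unit: "\<not> is_unit p" using p not_prime_unit by blast
  have "?J \<subseteq> (\<lambda>k. multiplicity p (s k)) ` {..<n}"
    unfolding inv_count_eq_card_multiplicity[OF p] by (auto simp: card_eq_0_iff)
  then have fin: "finite ?J" by (rule finite_surj[rotated]) simp
  have "{k. k < n \<and> p ^ i dvd s k} \<subseteq> {k. k < n \<and> s k = 0} \<union> (\<Union>j \<in> ?J. ?S j)"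
  proof
    fix k assume k: "k \<in> {k. k < n \<and> p ^ i dvd s k}"
    show "k \<in> {k. k < n \<and> s k = 0} \<union> (\<Union>j \<in> ?J. ?S j)"
    proof (cases "s k = 0")
      case False
      then have "i \<le> multiplicity p (s k)" using k multiplicity_geI[OF _ p_unit] by blast
      moreover have "k \<in> ?S (multiplicity p (s k))" using k False by simp
      ultimately show ?thesis
        unfolding inv_count_eq_card_multiplicity[OF p] by (auto simp: card_eq_0_iff)
    qed (use k in simp)
  qed
  then have "card {k. k < n \<and> p ^ i dvd s k} \<le> card ({k. k < n \<and> s k = 0} \<union> (\<Union>j \<in> ?J. ?S j))"
    by (intro card_mono) (use fin in simp_all)
  also have "\<dots> \<le> card {k. k < n \<and> s k = 0} + card (\<Union>j \<in> ?J. ?S j)"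
    by (rule card_Un_le)
  also have "card (\<Union>j \<in> ?J. ?S j) \<le> (\<Sum>j \<in> ?J. inv_count n s p j)"
    using card_UN_le[OF fin, of ?S] unfolding inv_count_eq_card_multiplicity[OF p] by simp
  finally show ?thesis by simp
qed

lemma card_not_dvd_le_inv_count_sum:
  fixes s :: "nat \<Rightarrow> int" and p :: int
  assumes p: "prime p"
  shows "card {k. k < n \<and> \<not> p ^ Suc i dvd s k} \<le> (\<Sum>j \<le> i. inv_count n s p j)"
proof -
  let ?S = "\<lambda>j. {k. k < n \<and> s k \<noteq> 0 \<and> multiplicity p (s k) = j}"
  have p_unit: "\<not> is_unit p" using p not_prime_unit by blast
  have "{k. k < n \<and> \<not> p ^ Suc i dvd s k} \<subseteq> (\<Union>j \<in> {..i}. ?S j)"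
  proof
    fix k assume k: "k \<in> {k. k < n \<and> \<not> p ^ Suc i dvd s k}"
    then have "s k \<noteq> 0" by auto
    moreover from this have "multiplicity p (s k) \<le> i"
      using k power_dvd_iff_le_multiplicity[OF _ p_unit, of "s k" "Suc i"] by auto
    ultimately show "k \<in> (\<Union>j \<in> {..i}. ?S j)" using k by auto
  qed
  then have "card {k. k < n \<and> \<not> p ^ Suc i dvd s k} \<le> card (\<Union>j \<in> {..i}. ?S j)"
    by (intro card_mono) simp_all
  also have "\<dots> \<le> (\<Sum>j \<le> i. inv_count n s p j)"
    unfolding inv_count_eq_card_multiplicity[OF p] by (rule card_UN_le) simp
  finally show ?thesis .
qed

section \<open>Integer matrices in Smith normal form\<close>

lemma unimodular_inverse:
  assumes "unimodular n U"
  obtains U' where "U' \<in> carrier_mat n n" "U * U' = 1\<^sub>m n" "det U' \<noteq> 0"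
proof -
  have U: "U \<in> carrier_mat n n" and d: "det U * det U = 1"
    using assms unfolding unimodular_def by auto
  define U' where "U' = det U \<cdot>\<^sub>m adj_mat U"
  have U': "U' \<in> carrier_mat n n" "U * U' = 1\<^sub>m n"
    using adj_mat_inverse[OF U d] unfolding U'_def by auto
  have "det U * det U' = 1" using det_mult[OF U U'(1)] U'(2) by simp
  then have "det U' \<noteq> 0" by auto
  with U' show ?thesis by (rule that)
qed

lemma mult_sub_scalar_mult:
  fixes X L Y :: "'a::comm_ring_1 mat"
  assumes X: "X \<in> carrier_mat n n" and L: "L \<in> carrier_mat n n" and Y: "Y \<in> carrier_mat n n"
  shows "X * (L - c \<cdot>\<^sub>m 1\<^sub>m n) * Y = X * L * Y - c \<cdot>\<^sub>m (X * Y)"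
proof -
  have "X * (L - c \<cdot>\<^sub>m 1\<^sub>m n) = X * L - X * (c \<cdot>\<^sub>m 1\<^sub>m n)"
    by (rule mult_minus_distrib_mat[OF X L]) simp
  also have "X * (c \<cdot>\<^sub>m 1\<^sub>m n) = c \<cdot>\<^sub>m X"
    unfolding mult_smult_distrib[OF X one_carrier_mat] right_mult_one_mat[OF X] ..
  finally have "X * (L - c \<cdot>\<^sub>m 1\<^sub>m n) * Y = (X * L - c \<cdot>\<^sub>m X) * Y" by simp
  also have "\<dots> = X * L * Y - (c \<cdot>\<^sub>m X) * Y"
    by (rule minus_mult_distrib_mat[OF _ _ Y]) (use X L in auto)
  also have "(c \<cdot>\<^sub>m X) * Y = c \<cdot>\<^sub>m (X * Y)" by (rule mult_smult_assoc_mat[OF X Y])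
  finally show ?thesis .
qed

lemma diag_mat_mult:
  assumes R: "R \<in> carrier_mat n m"
  shows "mat n n (\<lambda>(i,j). if i = j then s i else 0) * R = mat n m (\<lambda>(i,j). s i * R $$ (i,j))"
  using R by (intro eq_matI) (auto simp: scalar_prod_def sum_diag_mult)

lemma det_of_int_block:
  fixes N :: "int mat"
  assumes N: "N \<in> carrier_mat n n" and f: "\<And>i. i < t \<Longrightarrow> f i < n"
  shows "det (mat t t (\<lambda>(i,j). (map_mat of_int N :: 'a::comm_ring_1 mat) $$ (f i, f j)))
    = of_int (det (mat t t (\<lambda>(i,j). N $$ (f i, f j))))"
proof -
  have "mat t t (\<lambda>(i,j). (map_mat of_int N :: 'a mat) $$ (f i, f j))
    = map_mat of_int (mat t t (\<lambda>(i,j). N $$ (f i, f j)))"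
    using N f by (auto intro!: eq_matI)
  then show ?thesis by (simp add: of_int_hom.hom_det)
qed

lemma kernel_dim_of_int_mult_invertible:
  fixes X M Y :: "int mat"
  assumes X: "X \<in> carrier_mat n n" and M: "M \<in> carrier_mat n n" and Y: "Y \<in> carrier_mat n n"
    and dX: "det X \<noteq> 0" and dY: "det Y \<noteq> 0"
  shows "kernel.dim n (map_mat (of_int :: int \<Rightarrow> 'a::field_char_0) (X * M * Y))
    = kernel.dim n (map_mat (of_int :: int \<Rightarrow> 'a) M)"
proof -
  have "map_mat (of_int :: int \<Rightarrow> 'a) (X * M * Y)
    = map_mat of_int X * map_mat of_int M * map_mat of_int Y"
    by (simp only: of_int_hom.mat_hom_mult[OF mult_carrier_mat[OF X M] Y] of_int_hom.mat_hom_mult[OF X M])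
  then show ?thesis
    using kernel_dim_mult_invertible[of "map_mat of_int X" n "map_mat (of_int :: int \<Rightarrow> 'a) M"]
      X M Y dX dY by (simp add: of_int_hom.hom_det)
qed

lemma card_smith_zero_eq_kernel_dim:
  fixes L :: "int mat"
  assumes L: "L \<in> carrier_mat n n" and snf: "is_smith_normal_form n L s"
  shows "card {k. k < n \<and> s k = 0} = kernel.dim n (map_mat (of_int :: int \<Rightarrow> 'a::field_char_0) L)"
proof -
  obtain U V where U: "unimodular n U" and V: "unimodular n V"
    and ULV: "U * L * V = mat n n (\<lambda>(i,j). if i = j then s i else 0)"
    and chain: "\<forall>i. Suc i < n \<longrightarrow> s i dvd s (Suc i)"
    using snf unfolding is_smith_normal_form_def by auto
  obtain r where r: "r \<le> n" and nz: "{k. k < n \<and> \<not> 0 dvd s k} = {..<r}"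
    using dvd_chain_not_dvd_eq_lessThan[OF chain] .
  have "kernel.dim n (map_mat (of_int :: int \<Rightarrow> 'a) L)
    = kernel.dim n (map_mat (of_int :: int \<Rightarrow> 'a) (U * L * V))"
    using kernel_dim_of_int_mult_invertible[OF _ L, of U V, where 'a='a] U V
    unfolding unimodular_def by auto
  also have "map_mat (of_int :: int \<Rightarrow> 'a) (U * L * V)
    = mat n n (\<lambda>(i,j). if i = j then of_int (s i) else 0)"
    unfolding ULV by (auto intro!: eq_matI)
  also have "kernel.dim n \<dots> = n - r"
  proof (rule kernel_dim_diag_mat[OF r])
    fix k assume k: "k < n"
    have "k \<in> {k. k < n \<and> \<not> 0 dvd s k} \<longleftrightarrow> k \<in> {..<r}" using nz by simp
    then show "(of_int (s k) :: 'a) = 0 \<longleftrightarrow> r \<le> k" using k by auto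
  qed
  also have "n - r = card {k. k < n \<and> s k = 0}"
  proof -
    have "{k. k < n \<and> s k = 0} = {..<n} - {k. k < n \<and> \<not> 0 dvd s k}" by auto
    then have "{k. k < n \<and> s k = 0} = {..<n} - {..<r}" unfolding nz .
    then show ?thesis using r by simp
  qed
  finally show ?thesis by simp
qed

lemma kernel_dim_shifted_le_card_dvd:
  fixes L :: "int mat" and s :: "nat \<Rightarrow> int" and p \<eta> :: int
  assumes L: "L \<in> carrier_mat n n" and snf: "is_smith_normal_form n L s"
    and p: "prime p" and p\<eta>: "p ^ i dvd \<eta>"
  shows "kernel.dim n (map_mat (of_int :: int \<Rightarrow> 'a::field_char_0) (L - \<eta> \<cdot>\<^sub>m 1\<^sub>m n))
    \<le> card {k. k < n \<and> p ^ i dvd s k}"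
proof -
  obtain U V where U: "U \<in> carrier_mat n n" "det U \<noteq> 0" and V: "V \<in> carrier_mat n n" "det V \<noteq> 0"
    and ULV: "U * L * V = mat n n (\<lambda>(i,j). if i = j then s i else 0)"
    and chain: "\<forall>i. Suc i < n \<longrightarrow> s i dvd s (Suc i)"
    using snf unfolding is_smith_normal_form_def unimodular_def by fastforce
  obtain t where t: "t \<le> n" and T: "{k. k < n \<and> \<not> p ^ i dvd s k} = {..<t}"
    using dvd_chain_not_dvd_eq_lessThan[OF chain] .
  have M: "L - \<eta> \<cdot>\<^sub>m 1\<^sub>m n \<in> carrier_mat n n" by (rule minus_carrier_mat) simp
  define N where "N = U * (L - \<eta> \<cdot>\<^sub>m 1\<^sub>m n) * V"
  have N: "N \<in> carrier_mat n n" unfolding N_def using U V L by auto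
  have "mat t t (\<lambda>(k,l). N $$ (k,l))
    = mat t t (\<lambda>(k,l). (if k = l then s k else 0) - \<eta> * (U * V) $$ (k,l))"
    using t U V unfolding N_def mult_sub_scalar_mult[OF U(1) L V(1)] ULV by (auto intro!: eq_matI)
  also have "det \<dots> \<noteq> 0"
  proof (rule det_diag_sub_multiple_ne_0[OF p p\<eta>])
    fix k assume k: "k < t"
    then show "\<not> p ^ i dvd s k" using T t by blast
    show "s k dvd s (t - 1)" using dvd_chain_le[OF chain, of k "t - 1"] k t by simp
  qed
  finally have "det (mat t t (\<lambda>(k,l). (map_mat (of_int :: int \<Rightarrow> 'a) N) $$ (k,l))) \<noteq> 0"
    using det_of_int_block[OF N, of t "\<lambda>i. i", where 'a='a] t by simp
  then have "kernel.dim (t + (n - t)) (map_mat (of_int :: int \<Rightarrow> 'a) N) \<le> n - t"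
    by (intro kernel_dim_le_leading_block) (use N t in auto)
  then have "kernel.dim n (map_mat (of_int :: int \<Rightarrow> 'a) (L - \<eta> \<cdot>\<^sub>m 1\<^sub>m n)) \<le> n - t"
    using t kernel_dim_of_int_mult_invertible[OF U(1) M V(1) U(2) V(2), where 'a='a]
    unfolding N_def by simp
  moreover have "n - t = card {k. k < n \<and> p ^ i dvd s k}"
  proof -
    have "{k. k < n \<and> p ^ i dvd s k} = {..<n} - {k. k < n \<and> \<not> p ^ i dvd s k}" by auto
    then have "{k. k < n \<and> p ^ i dvd s k} = {..<n} - {..<t}" unfolding T .
    then show ?thesis using t by simp
  qed
  ultimately show ?thesis by simp
qed

lemma kernel_dim_shifted_le_card_not_dvd:
  fixes L :: "int mat" and s :: "nat \<Rightarrow> int" and p \<eta> :: int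
  assumes L: "L \<in> carrier_mat n n" and snf: "is_smith_normal_form n L s"
    and p: "prime p" and p\<eta>: "p ^ i dvd \<eta>" and not_p\<eta>: "\<not> p ^ Suc i dvd \<eta>"
  shows "kernel.dim n (map_mat (of_int :: int \<Rightarrow> 'a::field_char_0) (L - \<eta> \<cdot>\<^sub>m 1\<^sub>m n))
    \<le> card {k. k < n \<and> \<not> p ^ Suc i dvd s k}"
proof -
  obtain U V where U: "unimodular n U" and V: "unimodular n V"
    and ULV: "U * L * V = mat n n (\<lambda>(i,j). if i = j then s i else 0)"
    and chain: "\<forall>i. Suc i < n \<longrightarrow> s i dvd s (Suc i)"
    using snf unfolding is_smith_normal_form_def by auto
  have Uc: "U \<in> carrier_mat n n" "det U \<noteq> 0" and Vc: "V \<in> carrier_mat n n"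
    using U V unfolding unimodular_def by auto
  obtain U' where U': "U' \<in> carrier_mat n n" "U * U' = 1\<^sub>m n" "det U' \<noteq> 0"
    using unimodular_inverse[OF U] by blast
  obtain V' where V': "V' \<in> carrier_mat n n" "V * V' = 1\<^sub>m n"
    using unimodular_inverse[OF V] by blast
  define R where "R = V' * U'"
  have R: "R \<in> carrier_mat n n" unfolding R_def using U' V' by auto
  have VR: "V * R = U'"
    unfolding R_def using Vc V' U' by (simp add: assoc_mult_mat[of V n n V' n U' n, symmetric])
  have "U * L * V * R = U * L * (V * R)"
    by (rule assoc_mult_mat[of _ n n _ n _ n]) (use Uc L Vc R in auto)
  then have ULU': "U * L * U' = mat n n (\<lambda>(i,j). s i * R $$ (i,j))"
    unfolding VR ULV diag_mat_mult[OF R] by simp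
  obtain c where c: "c \<le> n" and C: "{k. k < n \<and> \<not> p ^ Suc i dvd s k} = {..<c}"
    using dvd_chain_not_dvd_eq_lessThan[OF chain] .
  have M: "L - \<eta> \<cdot>\<^sub>m 1\<^sub>m n \<in> carrier_mat n n" by (rule minus_carrier_mat) simp
  define N where "N = U * (L - \<eta> \<cdot>\<^sub>m 1\<^sub>m n) * U'"
  have N: "N \<in> carrier_mat (c + (n - c)) (c + (n - c))" unfolding N_def using Uc U' L c by auto
  have "mat (n - c) (n - c) (\<lambda>(k,l). N $$ (c + k, c + l))
    = mat (n - c) (n - c) (\<lambda>(k,l). s (c + k) * R $$ (c + k, c + l) - (if k = l then \<eta> else 0))"
    using R unfolding N_def mult_sub_scalar_mult[OF Uc(1) L U'(1)] ULU' U'(2)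
    by (auto intro!: eq_matI)
  also have "det \<dots> \<noteq> 0"
  proof (rule det_diag_mult_sub_scalar_ne_0[OF p p\<eta> not_p\<eta>])
    fix k assume "k < n - c"
    then have "c + k < n" "c + k \<notin> {..<c}" by auto
    then show "p ^ Suc i dvd s (c + k)" using C by blast
  qed
  finally have "det (mat (n - c) (n - c)
      (\<lambda>(k,l). (map_mat (of_int :: int \<Rightarrow> 'a) N) $$ (c + k, c + l))) \<noteq> 0"
    using det_of_int_block[of N n "n - c" "\<lambda>i. c + i", where 'a='a] N c by simp
  then have "kernel.dim (c + (n - c)) (map_mat (of_int :: int \<Rightarrow> 'a) N) \<le> c"
    by (intro kernel_dim_le_trailing_block) (use N in auto)
  then have "kernel.dim n (map_mat (of_int :: int \<Rightarrow> 'a) (L - \<eta> \<cdot>\<^sub>m 1\<^sub>m n)) \<le> c"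
    using c kernel_dim_of_int_mult_invertible[OF Uc(1) M U'(1) Uc(2) U'(3), where 'a='a]
    unfolding N_def by simp
  then show ?thesis unfolding C by simp
qed

section \<open>Graph Laplacians\<close>

lemma laplacian_carrier: "laplacian n E \<in> carrier_mat n n"
  unfolding laplacian_def degree_matrix_def adjacency_matrix_def by auto

lemma laplacian_index:
  assumes "i < n" and "j < n"
  shows "laplacian n E $$ (i,j)
    = (if i = j then int (card {k. k < n \<and> E i k}) else 0) - (if E i j then 1 else 0)"
  using assms unfolding laplacian_def degree_matrix_def adjacency_matrix_def by simp

lemma laplacian_symmetric:
  assumes "simple_graph n E" and "i < n" and "j < n"
  shows "laplacian n E $$ (i,j) = laplacian n E $$ (j,i)"
  using assms(1) unfolding laplacian_index[OF assms(2,3)] laplacian_index[OF assms(3,2)] simple_graph_def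
  by auto

lemma laplacian_row_sum:
  fixes x :: "nat \<Rightarrow> real"
  assumes sg: "simple_graph n E" and i: "i < n"
  shows "(\<Sum>j<n. real_of_int (laplacian n E $$ (i,j)) * x j) = (\<Sum>j \<in> {k. k < n \<and> E i k}. x i - x j)"
proof -
  let ?N = "{k. k < n \<and> E i k}"
  have "(\<Sum>j<n. real_of_int (laplacian n E $$ (i,j)) * x j)
      = (\<Sum>j<n. (if j = i then real (card ?N) * x j else 0) - (if E i j then x j else 0))"
    using sg i unfolding simple_graph_def
    by (intro sum.cong refl) (auto simp: laplacian_index algebra_simps)
  also have "\<dots> = real (card ?N) * x i - (\<Sum>j<n. if E i j then x j else 0)"
    using i by (simp add: sum_subtractf)
  also have "(\<Sum>j<n. if E i j then x j else 0) = (\<Sum>j \<in> ?N. x j)"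
    by (simp add: sum.If_cases lessThan_def Collect_conj_eq Int_commute)
  also have "real (card ?N) * x i - (\<Sum>j \<in> ?N. x j) = (\<Sum>j \<in> ?N. x i - x j)"
    by (simp add: sum_subtractf)
  finally show ?thesis .
qed

text \<open>Maximum principle: at a vertex where x is maximal, the row sum forces every neighbour
  to attain the maximum as well, and connectedness spreads it to all vertices.\<close>
lemma laplacian_harmonic_const:
  fixes x :: "nat \<Rightarrow> real"
  assumes sg: "simple_graph n E" and conn: "connected_graph n E"
    and harmonic: "\<And>i. i < n \<Longrightarrow> (\<Sum>j<n. real_of_int (laplacian n E $$ (i,j)) * x j) = 0"
    and i: "i < n" and j: "j < n"
  shows "x i = x j"
proof -
  have n: "{..<n} \<noteq> {}" and path: "\<And>a b. a < n \<Longrightarrow> b < n \<Longrightarrow> E\<^sup>*\<^sup>* a b"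
    using conn unfolding connected_graph_def by (auto simp: lessThan_empty_iff)
  define M where "M = Max (x ` {..<n})"
  have le: "x k \<le> M" if "k < n" for k unfolding M_def using that by (intro Max_ge) auto
  have "M \<in> x ` {..<n}" unfolding M_def using n by (intro Max_in) auto
  then obtain i0 where i0: "i0 < n" and xi0: "x i0 = M" by auto
  have step: "x z = M" if y: "x y = M" and Eyz: "E y z" for y z
  proof -
    have yn: "y < n" and zn: "z < n" using sg Eyz unfolding simple_graph_def by auto
    let ?N = "{k. k < n \<and> E y k}"
    have "(\<Sum>k \<in> ?N. x y - x k) = 0" using harmonic[OF yn] laplacian_row_sum[OF sg yn] by simp
    moreover have "\<forall>k \<in> ?N. 0 \<le> x y - x k" using le y by auto
    moreover have "finite ?N" by simp
    ultimately have "\<forall>k \<in> ?N. x y - x k = 0" using sum_nonneg_eq_0_iff[of ?N "\<lambda>k. x y - x k"] by blast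
    then show ?thesis using zn Eyz y by auto
  qed
  have max: "x b = M" if "E\<^sup>*\<^sup>* i0 b" for b
    using that by (induction rule: rtranclp_induct) (use xi0 step in auto)
  show ?thesis using max[OF path[OF i0 i]] max[OF path[OF i0 j]] by simp
qed

lemma laplacian_kernel_const:
  assumes sg: "simple_graph n E" and conn: "connected_graph n E"
    and v: "v \<in> mat_kernel (map_mat (of_int :: int \<Rightarrow> complex) (laplacian n E))"
    and i: "i < n" and j: "j < n"
  shows "v $ i = v $ j"
proof -
  let ?L = "laplacian n E"
  have Lc: "map_mat (of_int :: int \<Rightarrow> complex) ?L \<in> carrier_mat n n" using laplacian_carrier by simp
  have vc: "v \<in> carrier_vec n" and Lv: "map_mat of_int ?L *\<^sub>v v = 0\<^sub>v n"
    using mat_kernelD[OF Lc v] by auto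
  have row: "(\<Sum>j<n. of_int (?L $$ (k,j)) * v $ j) = (0::complex)" if k: "k < n" for k
  proof -
    have "(map_mat of_int ?L *\<^sub>v v) $ k = 0" using Lv k by simp
    then show ?thesis using k laplacian_carrier[of n E] vc by (auto simp: scalar_prod_def lessThan_atLeast0)
  qed
  have "Re (v $ i) = Re (v $ j)"
  proof (rule laplacian_harmonic_const[OF sg conn _ i j])
    fix k assume "k < n"
    then have "Re (\<Sum>j<n. of_int (?L $$ (k,j)) * v $ j) = 0" using row by simp
    then show "(\<Sum>j<n. real_of_int (?L $$ (k,j)) * Re (v $ j)) = 0" by (simp add: Re_sum)
  qed
  moreover have "Im (v $ i) = Im (v $ j)"
  proof (rule laplacian_harmonic_const[OF sg conn _ i j])
    fix k assume "k < n"
    then have "Im (\<Sum>j<n. of_int (?L $$ (k,j)) * v $ j) = 0" using row by simp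
    then show "(\<Sum>j<n. real_of_int (?L $$ (k,j)) * Im (v $ j)) = 0" by (simp add: Im_sum)
  qed
  ultimately show ?thesis by (simp add: complex_eq_iff)
qed

lemma laplacian_kernel_dim_le_1:
  assumes "simple_graph n E" and "connected_graph n E"
  shows "kernel.dim n (map_mat (of_int :: int \<Rightarrow> complex) (laplacian n E)) \<le> 1"
proof (rule kernel_dim_le_1_if_constant)
  show "map_mat (of_int :: int \<Rightarrow> complex) (laplacian n E) \<in> carrier_mat n n"
    using laplacian_carrier by simp
qed (use laplacian_kernel_const[OF assms] in blast)

interpretation of_real_poly: map_poly_inj_idom_divide_hom "of_real :: real \<Rightarrow> complex"
  by (unfold_locales, simp add: of_real_divide)

lemma eig_mult_eq_kernel_dim:
  fixes L :: "int mat"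
  assumes L: "L \<in> carrier_mat n n" and sym: "\<And>i j. i < n \<Longrightarrow> j < n \<Longrightarrow> L $$ (i,j) = L $$ (j,i)"
  shows "eig_mult L \<eta> = kernel.dim n (map_mat (of_int :: int \<Rightarrow> complex) (L - \<eta> \<cdot>\<^sub>m 1\<^sub>m n))"
proof -
  let ?Lr = "map_mat real_of_int L"
  let ?Lc = "map_mat (of_int :: int \<Rightarrow> complex) L"
  have Lr: "?Lr \<in> carrier_mat n n" and Lc: "?Lc \<in> carrier_mat n n" using L by auto
  have "eig_mult L \<eta> = Polynomial.order (of_real (real_of_int \<eta>)) (map_poly of_real (char_poly ?Lr) :: complex poly)"
    unfolding eig_mult_def by (rule of_real_poly.order_hom[symmetric])
  also have "map_poly of_real (char_poly ?Lr) = (char_poly ?Lc :: complex poly)"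
  proof -
    have "map_mat of_real ?Lr = ?Lc" by (auto intro!: eq_matI)
    then show ?thesis by (metis of_real_hom.char_poly_hom[OF Lr])
  qed
  also have "(of_real (real_of_int \<eta>) :: complex) = of_int \<eta>" by simp
  also have "Polynomial.order (of_int \<eta>) (char_poly ?Lc) = kernel.dim n (char_matrix ?Lc (of_int \<eta>))"
  proof (rule order_char_poly_hermitian[OF Lc])
    fix i j assume "i < n" "j < n"
    then show "?Lc $$ (j,i) = cnj (?Lc $$ (i,j))" using L sym[of i j] by simp
  qed simp
  also have "char_matrix ?Lc (of_int \<eta>) = map_mat of_int (L - \<eta> \<cdot>\<^sub>m 1\<^sub>m n)"
    using L by (auto intro!: eq_matI simp: char_matrix_def)
  finally show ?thesis .
qed

theorem lemma2p2:
  fixes n :: nat and E :: "nat \<Rightarrow> nat \<Rightarrow> bool" and p \<eta> :: int and s :: "nat \<Rightarrow> int"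
  assumes "simple_graph n E"
    and "connected_graph n E"
    and "prime p"
    and "is_smith_normal_form n (laplacian n E) s"
    and "eigenvalue (map_mat real_of_int (laplacian n E)) (real_of_int \<eta>)"
  shows "(\<forall>i. p ^ i dvd \<eta> \<longrightarrow>
           eig_mult (laplacian n E) \<eta> \<le> 1 + (\<Sum>j \<in> {j. i \<le> j \<and> inv_count n s p j \<noteq> 0}. inv_count n s p j)) \<and>
         (\<forall>i. p ^ i dvd \<eta> \<and> \<not> p ^ (Suc i) dvd \<eta> \<longrightarrow>
           eig_mult (laplacian n E) \<eta> \<le> (\<Sum>j \<le> i. inv_count n s p j))"
proof -
  let ?L = "laplacian n E"
  let ?K = "kernel.dim n (map_mat (of_int :: int \<Rightarrow> complex) (?L - \<eta> \<cdot>\<^sub>m 1\<^sub>m n))"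
  have L: "?L \<in> carrier_mat n n" by (rule laplacian_carrier)
  have mult: "eig_mult ?L \<eta> = ?K"
    using eig_mult_eq_kernel_dim[OF L] laplacian_symmetric[OF assms(1)] by blast
  have zeros: "card {k. k < n \<and> s k = 0} \<le> 1"
    using card_smith_zero_eq_kernel_dim[OF L assms(4), where 'a=complex]
      laplacian_kernel_dim_le_1[OF assms(1,2)] by simp
  show ?thesis
  proof (intro conjI allI impI)
    fix i assume "p ^ i dvd \<eta>"
    then have "?K \<le> card {k. k < n \<and> p ^ i dvd s k}"
      by (rule kernel_dim_shifted_le_card_dvd[OF L assms(4,3)])
    then show "eig_mult ?L \<eta> \<le> 1 + (\<Sum>j \<in> {j. i \<le> j \<and> inv_count n s p j \<noteq> 0}. inv_count n s p j)"
      using mult zeros card_dvd_le_inv_count_sum[OF assms(3), where n=n and s=s and i=i] by linarith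
  next
    fix i assume "p ^ i dvd \<eta> \<and> \<not> p ^ Suc i dvd \<eta>"
    then have "?K \<le> card {k. k < n \<and> \<not> p ^ Suc i dvd s k}"
      using kernel_dim_shifted_le_card_not_dvd[OF L assms(4,3)] by blast
    then show "eig_mult ?L \<eta> \<le> (\<Sum>j \<le> i. inv_count n s p j)"
      using mult card_not_dvd_le_inv_count_sum[OF assms(3), where n=n and s=s and i=i] by linarith
  qed
qed

end
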